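(* Let $\alpha,\beta,c\in\mathbb{C}$, $\ell(x,y)=\alpha x+\beta y$, and let $C(x,y)$ be a quadratic polynomial. For the pencil $\mathfrak E$ consisting of the conics $$\mathcal E_\lambda:\quad C(x,y)-\lambda\big(c^2-\ell^2(x,y)\big)=0,$$ the involution $I_{\mathfrak E,B_\infty}$ with $B_\infty=[-\beta:\alpha:0]$ is an affine map of $\mathbb{C}^2$.
   Context: For a nonsingular conic $\mathcal E$ and a point $B\notin\mathcal E$ of $\mathbb{C}P^2$ (possibly at infinity), $I_{\mathcal E,B}:\mathcal E\to\mathcal E$ sends $P$ to the second intersection point of $\mathcal E$ with the line $(BP)$. For a pencil $\mathfrak E=\{\mathcal E_\lambda\}$ of conics, the $B$-switch $I_{\mathfrak E,B}:\mathbb{C}^2\dashrightarrow\mathbb{C}^2$ sends a non-base point $P$ to $I_{\mathcal E_\lambda,B}(P)$, where $\mathcal E_\lambda$ is the unique conic of the pencil through $P$. *)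

theory Defs
  imports "HOL-Analysis.Analysis"
begin

text \<open>Points of the complex projective plane are represented by nonzero vectors of
  complex^3 (homogeneous coordinates [X:Y:Z]); conics by symmetric 3x3 complex
  matrices M, the conic being the zero set of the quadratic form qf M.
  The affine point (x,y) of C^2 is [x:y:1].\<close>

definition vec3 :: "complex \<Rightarrow> complex \<Rightarrow> complex \<Rightarrow> complex^3" where
  "vec3 a b c = (\<chi> i. if i = 1 then a else if i = 2 then b else c)"

definition sym3 :: "complex \<Rightarrow> complex \<Rightarrow> complex \<Rightarrow> complex \<Rightarrow> complex \<Rightarrow> complex
    \<Rightarrow> complex^3^3" where
  "sym3 m11 m22 m33 m12 m13 m23 =
     (\<chi> i j. if i = 1 \<and> j = 1 then m11 else if i = 2 \<and> j = 2 then m22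
            else if i = 3 \<and> j = 3 then m33
            else if (i = 1 \<and> j = 2) \<or> (i = 2 \<and> j = 1) then m12
            else if (i = 1 \<and> j = 3) \<or> (i = 3 \<and> j = 1) then m13
            else m23)"

definition qf :: "complex^3^3 \<Rightarrow> complex^3 \<Rightarrow> complex" where
  "qf M p = (\<Sum>i\<in>UNIV. \<Sum>j\<in>UNIV. M$i$j * p$i * p$j)"

definition nonsingular_conic :: "complex^3^3 \<Rightarrow> bool" where
  "nonsingular_conic M \<longleftrightarrow> det M \<noteq> 0"

definition proj_eq :: "complex^3 \<Rightarrow> complex^3 \<Rightarrow> bool" where
  "proj_eq p q \<longleftrightarrow> p \<noteq> 0 \<and> q \<noteq> 0 \<and> (\<exists>k. k \<noteq> 0 \<and> q = k *s p)"

definition on_line :: "complex^3 \<Rightarrow> complex^3 \<Rightarrow> complex^3 \<Rightarrow> bool" where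
  "on_line B P q \<longleftrightarrow> q \<noteq> 0 \<and> (\<exists>s t. q = s *s B + t *s P)"

text \<open>second_int M B P Q: Q is the second intersection point of the conic M with the
  line (BP): Q is on the conic and on the line, and Q differs from P unless P is the
  only intersection point (tangency, counted with multiplicity two).\<close>
definition second_int :: "complex^3^3 \<Rightarrow> complex^3 \<Rightarrow> complex^3 \<Rightarrow> complex^3 \<Rightarrow> bool" where
  "second_int M B P Q \<longleftrightarrow> on_line B P Q \<and> qf M Q = 0 \<and>
     (\<not> proj_eq P Q \<or> (\<forall>R. on_line B P R \<and> qf M R = 0 \<longrightarrow> proj_eq P R))"

definition pencil :: "complex^3^3 \<Rightarrow> complex^3^3 \<Rightarrow> (complex^3^3) set" where
  "pencil M1 M2 = {(\<chi> i j. \<mu> * M1$i$j + \<nu> * M2$i$j) | \<mu> \<nu>. (\<mu>, \<nu>) \<noteq> (0, 0)}"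

definition base_point :: "(complex^3^3) set \<Rightarrow> complex^3 \<Rightarrow> bool" where
  "base_point \<E> p \<longleftrightarrow> (\<forall>M\<in>\<E>. qf M p = 0)"

text \<open>Homogenized matrix of C(x,y) = a x^2 + b x y + d y^2 + e x + f y + g.\<close>
definition quad_matrix :: "complex \<Rightarrow> complex \<Rightarrow> complex \<Rightarrow> complex \<Rightarrow> complex \<Rightarrow> complex
    \<Rightarrow> complex^3^3" where
  "quad_matrix a b d e f g = sym3 a d g (b/2) (e/2) (f/2)"

text \<open>Homogenized matrix of c^2 - (alpha x + beta y)^2.\<close>
definition line_sq_matrix :: "complex \<Rightarrow> complex \<Rightarrow> complex \<Rightarrow> complex^3^3" where
  "line_sq_matrix \<alpha> \<beta> c = sym3 (-(\<alpha>^2)) (-(\<beta>^2)) (c^2) (-(\<alpha>*\<beta>)) 0 0"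

end

theory Submission
  imports Defs
begin

text \<open>Every line through \<open>B\<^sub>\<infinity> = [-\<beta>:\<alpha>:0]\<close> has direction \<open>(-\<beta>,\<alpha>)\<close>, along
  which \<open>\<ell>\<close> is constant; hence the quadratic form of \<open>c\<^sup>2 - \<ell>\<^sup>2\<close> vanishes at \<open>B\<close> and
  its polar form with \<open>B\<close> vanishes identically. For a point \<open>P\<close> on a conic \<open>M\<close> the
  second intersection of \<open>(B P)\<close> with \<open>M\<close> is \<open>P - (polar M P B / qf M B) B\<close>, so for
  \<open>M = \<mu> C + \<nu> (c\<^sup>2 - \<ell>\<^sup>2)\<close> it is the same as for \<open>C\<close>. Since \<open>B\<close> lies at
  infinity, \<open>polar C P B\<close> is an affine function of the affine coordinates of \<open>P\<close>.\<close>

definition polar :: "complex^3^3 \<Rightarrow> complex^3 \<Rightarrow> complex^3 \<Rightarrow> complex" where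
  "polar M p q = (\<Sum>i\<in>UNIV. \<Sum>j\<in>UNIV. M$i$j * (p$i * q$j + q$i * p$j))"

definition second_point :: "complex^3^3 \<Rightarrow> complex^3 \<Rightarrow> complex^3 \<Rightarrow> complex^3" where
  "second_point M B P = P - (polar M P B / qf M B) *s B"

lemma polar_commute: "polar M p q = polar M q p"
  by (simp add: polar_def add.commute)

lemma qf_add_smult:
  "qf M (s *s p + t *s q) = s\<^sup>2 * qf M p + s * t * polar M p q + t\<^sup>2 * qf M q"
  by (simp add: qf_def polar_def sum_3 power2_eq_square algebra_simps)

lemma qf_smult: "qf M (k *s p) = k\<^sup>2 * qf M p"
  using qf_add_smult[of M k p 0 p] by simp

lemma proj_eq_sym: "proj_eq p q \<Longrightarrow> proj_eq q p"
proof -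
  assume "proj_eq p q"
  then obtain k where "p \<noteq> 0" "q \<noteq> 0" "k \<noteq> 0" "q = k *s p"
    unfolding proj_eq_def by blast
  then show "proj_eq q p"
    unfolding proj_eq_def by (auto intro!: exI[of _ "inverse k"])
qed

lemma proj_eq_smult: "p \<noteq> 0 \<Longrightarrow> k \<noteq> 0 \<Longrightarrow> proj_eq p (k *s p)"
  unfolding proj_eq_def by (auto simp: vec_eq_iff)

lemma proj_eq_trans: "proj_eq p q \<Longrightarrow> proj_eq q r \<Longrightarrow> proj_eq p r"
  unfolding proj_eq_def by auto

lemma on_lineE:
  assumes "on_line B P R"
  obtains s t where "R = s *s B + t *s P" "R \<noteq> 0"
  using assms unfolding on_line_def by blast

lemma qf_on_line_through_conic_point:
  assumes "qf M P = 0"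
  shows "qf M (s *s B + t *s P) = s * (s * qf M B + t * polar M P B)"
  using assms by (simp add: qf_add_smult polar_commute power2_eq_square algebra_simps)

lemma second_point_eq_combination:
  "second_point M B P = (- (polar M P B / qf M B)) *s B + 1 *s P"
  by (simp add: second_point_def vec_eq_iff)

lemma second_point_nonzero:
  assumes "qf M P = 0" "qf M B \<noteq> 0" "P \<noteq> 0"
  shows "second_point M B P \<noteq> 0"
proof
  define r where "r = polar M P B / qf M B"
  assume "second_point M B P = 0"
  then have "P = r *s B"
    by (simp add: second_point_def r_def)
  then have "r = 0"
    using assms(1,2) by (simp add: qf_smult)
  with \<open>P = r *s B\<close> \<open>P \<noteq> 0\<close> show False
    by simp
qed

lemma qf_second_point:
  assumes "qf M P = 0" "qf M B \<noteq> 0"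
  shows "qf M (second_point M B P) = 0"
proof -
  have "qf M (second_point M B P) =
      - (polar M P B / qf M B) * (- (polar M P B / qf M B) * qf M B + polar M P B)"
    unfolding second_point_eq_combination qf_on_line_through_conic_point[OF assms(1)] by simp
  also have "\<dots> = 0"
    using assms(2) by simp
  finally show ?thesis .
qed

lemma polar_eq_0_if_proj_eq_second_point:
  assumes "qf M P = 0" "qf M B \<noteq> 0" "proj_eq P (second_point M B P)"
  shows "polar M P B = 0"
proof (rule ccontr)
  define r where "r = polar M P B / qf M B"
  assume "polar M P B \<noteq> 0"
  then have "r \<noteq> 0"
    using assms(2) by (simp add: r_def)
  obtain k where "second_point M B P = k *s P"
    using assms(3) unfolding proj_eq_def by blast
  then have "r *s B = (1 - k) *s P"
    by (simp add: second_point_def r_def vec_eq_iff algebra_simps)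
  then have "B = ((1 - k) / r) *s P"
    using \<open>r \<noteq> 0\<close> by (simp add: vec_eq_iff field_simps)
  then have "qf M B = 0"
    using assms(1) by (simp add: qf_smult)
  with assms(2) show False ..
qed

lemma second_int_second_point:
  assumes "qf M P = 0" "qf M B \<noteq> 0" "P \<noteq> 0"
  shows "second_int M B P (second_point M B P)"
  unfolding second_int_def
proof (intro conjI)
  show "on_line B P (second_point M B P)"
    using second_point_eq_combination second_point_nonzero[OF assms]
    unfolding on_line_def by blast
  show "qf M (second_point M B P) = 0"
    using qf_second_point[OF assms(1,2)] .
  have "proj_eq P R" if tangent: "proj_eq P (second_point M B P)"
    and R: "on_line B P R" "qf M R = 0" for R
  proof -
    obtain s t where st: "R = s *s B + t *s P" "R \<noteq> 0"
      using R(1) by (rule on_lineE)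
    have "polar M P B = 0"
      using polar_eq_0_if_proj_eq_second_point assms(1,2) tangent by blast
    then have "s = 0"
      using R(2) assms(2) by (simp add: st qf_on_line_through_conic_point[OF assms(1)])
    with st have "R = t *s P" "t \<noteq> 0"
      by auto
    then show "proj_eq P R"
      using proj_eq_smult assms(3) by simp
  qed
  then show "\<not> proj_eq P (second_point M B P) \<or>
      (\<forall>R. on_line B P R \<and> qf M R = 0 \<longrightarrow> proj_eq P R)"
    by blast
qed

lemma second_int_imp_proj_eq_second_point:
  assumes "qf M P = 0" "qf M B \<noteq> 0" "P \<noteq> 0" and Q: "second_int M B P Q"
  shows "proj_eq Q (second_point M B P)"
proof -
  obtain s t where st: "Q = s *s B + t *s P" "Q \<noteq> 0"
    using Q unfolding second_int_def by (auto elim: on_lineE)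
  have "s * (s * qf M B + t * polar M P B) = 0"
    using Q unfolding second_int_def st(1) qf_on_line_through_conic_point[OF assms(1)] by simp
  then consider "s = 0" | "s * qf M B + t * polar M P B = 0"
    by auto
  then show ?thesis
  proof cases
    case 1
    with st have "t \<noteq> 0" "Q = t *s P"
      by auto
    then have "proj_eq P Q"
      using proj_eq_smult assms(3) by simp
    moreover have "proj_eq P (second_point M B P)"
      using Q \<open>proj_eq P Q\<close> second_int_second_point[OF assms(1-3)]
      unfolding second_int_def by blast
    ultimately show ?thesis
      using proj_eq_sym proj_eq_trans by blast
  next
    case 2
    then have "s * qf M B = - t * polar M P B"
      by (simp add: eq_neg_iff_add_eq_0)
    then have "s = - t * (polar M P B / qf M B)"
      using assms(2) by (simp add: field_simps)
    then have "Q = t *s second_point M B P"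
      by (simp add: st(1) second_point_def vec_eq_iff algebra_simps)
    then show ?thesis
      using st(2) proj_eq_sym proj_eq_smult by fastforce
  qed
qed

lemma qf_lincomb:
  "qf (\<chi> i j. \<mu> * M1$i$j + \<nu> * M2$i$j) p = \<mu> * qf M1 p + \<nu> * qf M2 p"
  by (simp add: qf_def sum_3 algebra_simps)

lemma polar_lincomb:
  "polar (\<chi> i j. \<mu> * M1$i$j + \<nu> * M2$i$j) p q = \<mu> * polar M1 p q + \<nu> * polar M2 p q"
  by (simp add: polar_def sum_3 algebra_simps)

lemma second_point_pencil:
  assumes "M \<in> pencil M1 M2" "qf M2 B = 0" "polar M2 P B = 0" "qf M B \<noteq> 0"
  shows "second_point M B P = second_point M1 B P"
proof -
  obtain \<mu> \<nu> where M: "M = (\<chi> i j. \<mu> * M1$i$j + \<nu> * M2$i$j)"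
    using assms(1) unfolding pencil_def by blast
  have "qf M B = \<mu> * qf M1 B" "polar M P B = \<mu> * polar M1 P B"
    using assms(2,3) by (simp_all add: M qf_lincomb polar_lincomb)
  with assms(4) show ?thesis
    by (simp add: second_point_def)
qed

lemma vec3_nth [simp]: "vec3 a b c $ 1 = a" "vec3 a b c $ 2 = b" "vec3 a b c $ 3 = c"
  by (simp_all add: vec3_def)

lemma qf_line_sq_matrix_at_infinity: "qf (line_sq_matrix \<alpha> \<beta> c) (vec3 (-\<beta>) \<alpha> 0) = 0"
  by (simp add: qf_def sum_3 line_sq_matrix_def sym3_def algebra_simps power2_eq_square)

lemma polar_line_sq_matrix_at_infinity:
  "polar (line_sq_matrix \<alpha> \<beta> c) (vec3 x y z) (vec3 (-\<beta>) \<alpha> 0) = 0"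
  by (simp add: polar_def sum_3 line_sq_matrix_def sym3_def algebra_simps power2_eq_square)

lemma second_point_quad_matrix_affine:
  "\<exists>a11 a12 a21 a22 b1 b2. \<forall>x y.
    second_point (quad_matrix a b d e f g) (vec3 (-\<beta>) \<alpha> 0) (vec3 x y 1) =
      vec3 (a11*x + a12*y + b1) (a21*x + a22*y + b2) 1"
proof -
  define K where "K = qf (quad_matrix a b d e f g) (vec3 (-\<beta>) \<alpha> 0)"
  define h1 h2 h0 where "h1 = b*\<alpha> - 2*a*\<beta>" and "h2 = 2*d*\<alpha> - b*\<beta>" and "h0 = f*\<alpha> - e*\<beta>"
  have polar: "polar (quad_matrix a b d e f g) (vec3 x y 1) (vec3 (-\<beta>) \<alpha> 0) =
      h1 * x + h2 * y + h0" for x y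
    by (simp add: polar_def sum_3 quad_matrix_def sym3_def h1_def h2_def h0_def algebra_simps)
  show ?thesis
    by (intro exI[of _ "1 + \<beta> * h1 / K"] exI[of _ "\<beta> * h2 / K"]
        exI[of _ "- \<alpha> * h1 / K"] exI[of _ "1 - \<alpha> * h2 / K"]
        exI[of _ "\<beta> * h0 / K"] exI[of _ "- \<alpha> * h0 / K"] allI)
      (simp add: second_point_def polar K_def[symmetric] vec_eq_iff forall_3
        divide_inverse algebra_simps)
qed

theorem corollary1:
  fixes \<alpha> \<beta> c a b d e f g :: complex
  assumes "(\<alpha>, \<beta>) \<noteq> (0, 0)"
    and "(a, b, d) \<noteq> (0, 0, 0)"
  defines "\<E> \<equiv> pencil (quad_matrix a b d e f g) (line_sq_matrix \<alpha> \<beta> c)"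
    and "B \<equiv> vec3 (-\<beta>) \<alpha> 0"
  shows "\<exists>a11 a12 a21 a22 b1 b2 :: complex.
    \<forall>x y :: complex. \<forall>M\<in>\<E>.
      \<not> base_point \<E> (vec3 x y 1) \<and> qf M (vec3 x y 1) = 0 \<and>
      nonsingular_conic M \<and> qf M B \<noteq> 0 \<longrightarrow>
        second_int M B (vec3 x y 1) (vec3 (a11*x + a12*y + b1) (a21*x + a22*y + b2) 1) \<and>
        (\<forall>Q. second_int M B (vec3 x y 1) Q \<longrightarrow>
              proj_eq Q (vec3 (a11*x + a12*y + b1) (a21*x + a22*y + b2) 1))"
proof -
  obtain a11 a12 a21 a22 b1 b2 where affine: "\<And>x y.
      second_point (quad_matrix a b d e f g) B (vec3 x y 1) =
        vec3 (a11*x + a12*y + b1) (a21*x + a22*y + b2) 1"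
    using second_point_quad_matrix_affine unfolding B_def by metis
  have "second_int M B (vec3 x y 1) (vec3 (a11*x + a12*y + b1) (a21*x + a22*y + b2) 1) \<and>
      (\<forall>Q. second_int M B (vec3 x y 1) Q \<longrightarrow>
        proj_eq Q (vec3 (a11*x + a12*y + b1) (a21*x + a22*y + b2) 1))"
    if "M \<in> \<E>" "qf M (vec3 x y 1) = 0" "qf M B \<noteq> 0" for M x y
  proof -
    have "vec3 x y 1 \<noteq> 0"
      by (metis vec3_nth(3) zero_index zero_neq_one)
    moreover have "second_point M B (vec3 x y 1) = vec3 (a11*x + a12*y + b1) (a21*x + a22*y + b2) 1"
      using second_point_pencil[OF that(1)[unfolded \<E>_def]] that(3) affine
      by (simp add: B_def qf_line_sq_matrix_at_infinity polar_line_sq_matrix_at_infinity)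
    ultimately show ?thesis
      using second_int_second_point second_int_imp_proj_eq_second_point that(2,3) by metis
  qed
  then show ?thesis
    by blast
qed

end
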